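(* Let $X$ be a nonempty set of order $n \ge 3$, and let $NG$ be an NG-group on $X$ with associated directed multigraph $(NG)_{dig}$. Then $$\sum_{v \in X} \rho(v) \le 2 \cdot n!.$$
   Context: An NG-group on a set $X$ is a set of maps $X \to X$ that forms a group under composition of functions and is not contained in the symmetric group $\mathrm{Sym}(X)$. The directed multigraph $(NG)_{dig}$ has vertex set $X$. For every $f \in NG$ and every $x \in X$ there is one arc from $x$ to $f(x)$; this arc is a loop when $f(x) = x$. Arcs coming from different maps are distinct. The degree of a vertex is $\rho(v) = \rho^+(v) + \rho^-(v)$, the sum of its out-degree and its in-degree. A loop contributes $1$ to each. *)

theory Defs
  imports "HOL-Algebra.Group" "HOL-Library.FuncSet"
begin

definition NG_group :: "'a set \<Rightarrow> ('a \<Rightarrow> 'a) set \<Rightarrow> bool" where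
  "NG_group X NG \<longleftrightarrow>
     NG \<subseteq> (X \<rightarrow>\<^sub>E X) \<and>
     (\<exists>e. group \<lparr>carrier = NG, monoid.mult = (\<lambda>g f. compose X g f), one = e\<rparr>) \<and>
     \<not> NG \<subseteq> {f \<in> X \<rightarrow>\<^sub>E X. bij_betw f X X}"

text \<open>Arcs of (NG)_dig: one arc (f, x) from x to f x for every f in NG and x in X.\<close>

definition ng_arcs :: "'a set \<Rightarrow> ('a \<Rightarrow> 'a) set \<Rightarrow> (('a \<Rightarrow> 'a) \<times> 'a) set" where
  "ng_arcs X NG = NG \<times> X"

definition ng_outdeg :: "'a set \<Rightarrow> ('a \<Rightarrow> 'a) set \<Rightarrow> 'a \<Rightarrow> nat" where
  "ng_outdeg X NG v = card {a \<in> ng_arcs X NG. snd a = v}"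

definition ng_indeg :: "'a set \<Rightarrow> ('a \<Rightarrow> 'a) set \<Rightarrow> 'a \<Rightarrow> nat" where
  "ng_indeg X NG v = card {a \<in> ng_arcs X NG. fst a (snd a) = v}"

definition ng_deg :: "'a set \<Rightarrow> ('a \<Rightarrow> 'a) set \<Rightarrow> 'a \<Rightarrow> nat" where
  "ng_deg X NG v = ng_outdeg X NG v + ng_indeg X NG v"

end

theory Submission
  imports Defs "HOL-Combinatorics.Permutations"
begin

text \<open>The identity e of an NG-group is an idempotent map, so it fixes its image Y = e ` X
  pointwise. Every f in NG satisfies e \<circ> f = f = f \<circ> e, hence maps X into Y and is
  determined by its values on Y; having a left inverse modulo e, f is injective on Y and so
  permutes the finite set Y. Restriction to Y therefore embeds NG into Sym(Y). If Y were all
  of X, every f would be a bijection of X; so Y is a proper subset and |NG| \<le> (n - 1)!.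
  Finally each map contributes n arcs, each counted once in an out-degree and once in an
  in-degree, so the degree sum is 2 n |NG| \<le> 2 n!.\<close>

locale map_group =
  fixes X :: "'a set" and NG :: "('a \<Rightarrow> 'a) set" and e :: "'a \<Rightarrow> 'a"
  assumes maps_into: "NG \<subseteq> X \<rightarrow>\<^sub>E X"
    and group_compose: "group \<lparr>carrier = NG, monoid.mult = (\<lambda>g f. compose X g f), one = e\<rparr>"
begin

lemma one_mem: "e \<in> NG"
  using monoid.one_closed[OF group.is_monoid[OF group_compose]] by simp

lemma compose_one_left: "f \<in> NG \<Longrightarrow> compose X e f = f"
  using monoid.l_one[OF group.is_monoid[OF group_compose]] by simp

lemma compose_one_right: "f \<in> NG \<Longrightarrow> compose X f e = f"
  using monoid.r_one[OF group.is_monoid[OF group_compose]] by simp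

lemma left_inverse_ex: "f \<in> NG \<Longrightarrow> \<exists>g\<in>NG. compose X g f = e"
  using group.l_inv_ex[OF group_compose] by simp

lemma apply_mem: "f \<in> NG \<Longrightarrow> x \<in> X \<Longrightarrow> f x \<in> X"
  using maps_into by auto

lemma apply_one: "f \<in> NG \<Longrightarrow> x \<in> X \<Longrightarrow> f (e x) = f x"
  using fun_cong[OF compose_one_right, of f x] by (simp add: compose_def)

lemma one_apply: "f \<in> NG \<Longrightarrow> x \<in> X \<Longrightarrow> e (f x) = f x"
  using fun_cong[OF compose_one_left, of f x] by (simp add: compose_def)

lemma one_image_subset: "e ` X \<subseteq> X"
  using apply_mem one_mem by auto

lemma one_fixes_one_image: "y \<in> e ` X \<Longrightarrow> e y = y"
  using one_apply[OF one_mem] by auto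

lemma apply_mem_one_image:
  assumes "f \<in> NG" and "x \<in> X"
  shows "f x \<in> e ` X"
proof -
  have "f x = e (f x)"
    using one_apply[OF assms] by simp
  then show ?thesis
    using apply_mem[OF assms] by (rule image_eqI)
qed

lemma inj_on_one_image:
  assumes "f \<in> NG"
  shows "inj_on f (e ` X)"
proof (rule inj_onI)
  fix a b assume a: "a \<in> e ` X" and b: "b \<in> e ` X" and "f a = f b"
  obtain g where "compose X g f = e"
    using left_inverse_ex[OF assms] by blast
  then have left_inverse: "g (f x) = e x" if "x \<in> X" for x
    using compose_eq[OF that, of g f] by simp
  have "a \<in> X" and "b \<in> X"
    using a b one_image_subset by auto
  have "a = e a"
    using one_fixes_one_image[OF a] by simp
  also have "\<dots> = g (f b)"
    using left_inverse[OF \<open>a \<in> X\<close>] \<open>f a = f b\<close> by simp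
  also have "\<dots> = b"
    using left_inverse[OF \<open>b \<in> X\<close>] one_fixes_one_image[OF b] by simp
  finally show "a = b" .
qed

lemma bij_betw_one_image:
  assumes "finite X" and "f \<in> NG"
  shows "bij_betw f (e ` X) (e ` X)"
proof -
  have "f ` e ` X \<subseteq> e ` X"
    using apply_mem_one_image[OF assms(2)] one_image_subset by auto
  moreover have "card (f ` e ` X) = card (e ` X)"
    using card_image[OF inj_on_one_image[OF assms(2)]] .
  ultimately have "f ` e ` X = e ` X"
    using assms(1) by (simp add: card_subset_eq)
  then show ?thesis
    using inj_on_one_image[OF assms(2)] by (simp add: bij_betw_def)
qed

lemma inj_on_restrict_id_one_image: "inj_on (\<lambda>f. restrict_id f (e ` X)) NG"
proof (rule inj_onI)
  fix f g assume f: "f \<in> NG" and g: "g \<in> NG"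
    and eq: "restrict_id f (e ` X) = restrict_id g (e ` X)"
  show "f = g"
  proof
    fix x
    show "f x = g x"
    proof (cases "x \<in> X")
      case True
      then have "f (e x) = g (e x)"
        using fun_cong[OF eq, of "e x"] by simp
      then show ?thesis
        using apply_one[OF f True] apply_one[OF g True] by simp
    next
      case False
      have "f \<in> X \<rightarrow>\<^sub>E X" and "g \<in> X \<rightarrow>\<^sub>E X"
        using f g maps_into by auto
      then show ?thesis
        using PiE_arb[of f X "\<lambda>_. X" x] PiE_arb[of g X "\<lambda>_. X" x] False by simp
    qed
  qed
qed

lemma card_le_fact_one_image:
  assumes "finite X"
  shows "card NG \<le> fact (card (e ` X))"
proof -
  have "(\<lambda>f. restrict_id f (e ` X)) ` NG \<subseteq> {p. p permutes e ` X}"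
    using permutes_restrict_id bij_betw_one_image[OF assms] by blast
  then have "card ((\<lambda>f. restrict_id f (e ` X)) ` NG) \<le> card {p. p permutes e ` X}"
    using assms by (intro card_mono finite_permutations finite_imageI)
  then have "card NG \<le> card {p. p permutes e ` X}"
    by (simp add: card_image[OF inj_on_restrict_id_one_image])
  also have "\<dots> = fact (card (e ` X))"
    using assms by (intro card_permutations) auto
  finally show ?thesis .
qed

end

lemma NG_group_card_le_fact:
  assumes "finite X" and "NG_group X NG"
  shows "card NG \<le> fact (card X - 1)"
proof -
  obtain e where "map_group X NG e"
    using assms(2) by (auto simp: NG_group_def map_group_def)
  then interpret map_group X NG e .
  have "e ` X \<noteq> X"
  proof
    assume "e ` X = X"
    then have "NG \<subseteq> {f \<in> X \<rightarrow>\<^sub>E X. bij_betw f X X}"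
      using bij_betw_one_image[OF assms(1)] maps_into by auto
    with assms(2) show False
      by (simp add: NG_group_def)
  qed
  then have "card (e ` X) < card X"
    using one_image_subset assms(1) by (simp add: psubset_card_mono psubsetI)
  then have "card (e ` X) \<le> card X - 1"
    by simp
  then show ?thesis
    by (rule order.trans[OF card_le_fact_one_image[OF assms(1)] fact_mono_nat])
qed

lemma sum_ng_deg_eq:
  assumes "finite X" and "NG \<subseteq> X \<rightarrow>\<^sub>E X"
  shows "(\<Sum>v\<in>X. ng_deg X NG v) = 2 * (card NG * card X)"
proof -
  have "finite NG"
    by (rule finite_subset[OF assms(2)]) (simp add: assms(1) finite_PiE)
  have heads_in: "(\<lambda>a. fst a (snd a)) ` (NG \<times> X) \<subseteq> X"
    using assms(2) by (auto simp: PiE_iff)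
  have "ng_outdeg X NG v = card NG" if "v \<in> X" for v
  proof -
    have "{a \<in> NG \<times> X. snd a = v} = NG \<times> {v}"
      using that by auto
    then show ?thesis
      by (simp add: ng_outdeg_def ng_arcs_def card_cartesian_product)
  qed
  then have outdeg: "(\<Sum>v\<in>X. ng_outdeg X NG v) = card NG * card X"
    by simp
  have "(\<Sum>v\<in>X. ng_indeg X NG v) = (\<Sum>v\<in>X. \<Sum>a\<in>{a \<in> NG \<times> X. fst a (snd a) = v}. 1)"
    by (simp add: ng_indeg_def ng_arcs_def)
  also have "\<dots> = (\<Sum>a\<in>NG \<times> X. 1)"
    using \<open>finite NG\<close> assms(1) heads_in by (intro sum.group) auto
  also have "\<dots> = card NG * card X"
    by (simp add: card_cartesian_product)
  finally show ?thesis
    using outdeg by (simp add: ng_deg_def sum.distrib)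
qed

theorem mainTheorem4:
  fixes X :: "'a set" and NG :: "('a \<Rightarrow> 'a) set" and n :: nat
  assumes "finite X" and "X \<noteq> {}" and "card X = n" and "n \<ge> 3"
    and "NG_group X NG"
  shows "(\<Sum>v\<in>X. ng_deg X NG v) \<le> 2 * fact n"
proof -
  have "(\<Sum>v\<in>X. ng_deg X NG v) = 2 * (card NG * n)"
    using sum_ng_deg_eq[OF assms(1)] assms(3,5) by (simp add: NG_group_def)
  also have "\<dots> \<le> 2 * (fact (n - 1) * n)"
    using NG_group_card_le_fact[OF assms(1,5)] assms(3) by simp
  also have "\<dots> = 2 * fact n"
    using fact_reduce[of n, where 'a = nat] assms(4) by simp
  finally show ?thesis .
qed

end
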